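(* Let $X,Y$ be connected FDSs with $[X]_0=[Y]_0$. If $\widetilde{X}=\widetilde{Y}$ (as forests, up to isomorphism), then $X=Y$.
   Context: A finite dynamical system (FDS) is a function $A:S_A\to S_A$ on a finite set, considered up to isomorphism of functional graphs (arcs $x\to A(x)$); it is connected if its functional graph is weakly connected. Write $A^{\circ m}$ for the $m$-fold iterate of $A$. A state $s$ is a cycle state if $A^{\circ m}(s)=s$ for some $m>0$. The depth of a state is $0$ for cycle states and $\operatorname{depth}(A(s))+1$ otherwise; $[A]_0$ is the restriction of $A$ to its cycle states. The unrolling $\widetilde{A}$ of $A$ is the forest whose vertex set is $\{(s,k)\in S_A\times\mathbb{N}: A^{\circ k}(s)\text{ is a cycle state}\}$, with an arc $(s,k)\to(A(s),k-1)$ for each such vertex with $k\ge1$; its roots are the vertices $(a,0)$ with $a$ a cycle state (so it is a disjoint union of one infinite rooted in-tree per cycle state). *)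

theory Defs
  imports Main
begin

text \<open>A finite dynamical system is represented by a finite carrier set S and a map
  f with f ` S \<subseteq> S (values of f outside S are irrelevant).\<close>

definition is_fds :: "'a set \<Rightarrow> ('a \<Rightarrow> 'a) \<Rightarrow> bool" where
  "is_fds S f \<longleftrightarrow> finite S \<and> (\<forall>x\<in>S. f x \<in> S)"

definition fds_iso :: "'a set \<Rightarrow> ('a \<Rightarrow> 'a) \<Rightarrow> 'b set \<Rightarrow> ('b \<Rightarrow> 'b) \<Rightarrow> bool" where
  "fds_iso S f T g \<longleftrightarrow> (\<exists>h. bij_betw h S T \<and> (\<forall>x\<in>S. h (f x) = g (h x)))"

definition fds_arcs :: "'a set \<Rightarrow> ('a \<Rightarrow> 'a) \<Rightarrow> ('a \<times> 'a) set" where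
  "fds_arcs S f = {(x, f x) | x. x \<in> S}"

definition fds_connected :: "'a set \<Rightarrow> ('a \<Rightarrow> 'a) \<Rightarrow> bool" where
  "fds_connected S f \<longleftrightarrow>
     (\<forall>x\<in>S. \<forall>y\<in>S. (x, y) \<in> (fds_arcs S f \<union> (fds_arcs S f)\<inverse>)\<^sup>*)"

definition cycle_state :: "'a set \<Rightarrow> ('a \<Rightarrow> 'a) \<Rightarrow> 'a \<Rightarrow> bool" where
  "cycle_state S f s \<longleftrightarrow> s \<in> S \<and> (\<exists>m>0. (f ^^ m) s = s)"

text \<open>[A]_0: restriction of A to its cycle states.\<close>
definition cycle_states :: "'a set \<Rightarrow> ('a \<Rightarrow> 'a) \<Rightarrow> 'a set" where
  "cycle_states S f = {s. cycle_state S f s}"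

definition unroll_vertices :: "'a set \<Rightarrow> ('a \<Rightarrow> 'a) \<Rightarrow> ('a \<times> nat) set" where
  "unroll_vertices S f = {(s, k). s \<in> S \<and> cycle_state S f ((f ^^ k) s)}"

definition unroll_arcs :: "'a set \<Rightarrow> ('a \<Rightarrow> 'a) \<Rightarrow> (('a \<times> nat) \<times> ('a \<times> nat)) set" where
  "unroll_arcs S f = {((s, k), (f s, k - 1)) | s k. (s, k) \<in> unroll_vertices S f \<and> k \<ge> 1}"

definition digraph_iso :: "'v set \<Rightarrow> ('v \<times> 'v) set \<Rightarrow> 'w set \<Rightarrow> ('w \<times> 'w) set \<Rightarrow> bool" where
  "digraph_iso V E W F \<longleftrightarrow>
     (\<exists>h. bij_betw h V W \<and> (\<forall>u\<in>V. \<forall>v\<in>V. (u, v) \<in> E \<longleftrightarrow> (h u, h v) \<in> F))"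

definition unroll_iso :: "'a set \<Rightarrow> ('a \<Rightarrow> 'a) \<Rightarrow> 'b set \<Rightarrow> ('b \<Rightarrow> 'b) \<Rightarrow> bool" where
  "unroll_iso S f T g \<longleftrightarrow>
     digraph_iso (unroll_vertices S f) (unroll_arcs S f) (unroll_vertices T g) (unroll_arcs T g)"

end

theory Submission
  imports Defs
begin

(* Fix a cycle state a of the connected system X. An isomorphism h of the unrollings
   preserves depth (the roots are the vertices without outgoing arc) and commutes with the
   parent maps (s, k) -> (f s, k - 1); write psi_k s for the state component of h (s, k). Sending s to psi_K s, where K is the least number of
   steps from s to a, is a morphism X -> Y. The point is that, as [X]_0 = [Y]_0 and X has a
   single cycle, the cycle states of Y have exactly the periods of a. Hence psi_d a = psi_0 a
   whenever f^d a = a, which handles the step from a once around the cycle, and a is the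
   only state sent to psi_0 a, which together with injectivity of h on each level makes the
   morphism injective. By symmetry Y embeds into X as well, and injective morphisms in both
   directions between finite systems are isomorphisms. *)

lemma funpow_funpow_swap: "(f ^^ m) ((f ^^ n) x) = (f ^^ n) ((f ^^ m) x)"
  by (metis add.commute comp_apply funpow_add)

lemma funpow_fixed_funpow: "(f ^^ d) x = x \<Longrightarrow> (f ^^ d) ((f ^^ k) x) = (f ^^ k) x"
  by (metis funpow_funpow_swap)

lemma funpow_fixed_iff_if_mutually_reachable:
  assumes "(f ^^ k) c = a" and "(f ^^ j) a = c"
  shows "(f ^^ d) c = c \<longleftrightarrow> (f ^^ d) a = a"
  using assms funpow_fixed_funpow by metis

lemma fds_funpow_closed: "is_fds S f \<Longrightarrow> s \<in> S \<Longrightarrow> (f ^^ n) s \<in> S"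
  by (induction n) (auto simp: is_fds_def)

lemma cycle_state_funpow:
  assumes "is_fds S f" and "cycle_state S f c"
  shows "cycle_state S f ((f ^^ n) c)"
  using assms fds_funpow_closed funpow_fixed_funpow unfolding cycle_state_def by metis

lemma cycle_state_funpow_ge_card:
  assumes fds: "is_fds S f" and s: "s \<in> S" and n: "card S \<le> n"
  shows "cycle_state S f ((f ^^ n) s)"
proof -
  have "(\<lambda>i. (f ^^ i) s) ` {0..card S} \<subseteq> S"
    using fds_funpow_closed[OF fds s] by auto
  then have "card ((\<lambda>i. (f ^^ i) s) ` {0..card S}) < card {0..card S}"
    using fds by (simp add: is_fds_def card_mono le_imp_less_Suc)
  then have "\<not> inj_on (\<lambda>i. (f ^^ i) s) {0..card S}"
    by (rule pigeonhole)
  then obtain i j where ij: "i < j" "j \<le> card S" "(f ^^ j) s = (f ^^ i) s"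
    unfolding inj_on_def by (metis atLeastAtMost_iff linorder_neqE_nat)
  then have "(f ^^ (j - i)) ((f ^^ i) s) = (f ^^ i) s"
    by (metis comp_apply funpow_add le_add_diff_inverse2 less_imp_le)
  then have "cycle_state S f ((f ^^ i) s)"
    using ij(1) fds_funpow_closed[OF fds s] unfolding cycle_state_def by (metis zero_less_diff)
  then have "cycle_state S f ((f ^^ (n - i)) ((f ^^ i) s))"
    using cycle_state_funpow[OF fds] by blast
  then show ?thesis
    using ij n by (metis comp_apply funpow_add le_add_diff_inverse2 order.trans less_imp_le)
qed

lemma cycle_states_closed: "is_fds S f \<Longrightarrow> x \<in> cycle_states S f \<Longrightarrow> f x \<in> cycle_states S f"
  using cycle_state_funpow[of S f x 1] by (simp add: cycle_states_def)

lemma cycle_state_reachable_back: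
  assumes "cycle_state S f c" and "(f ^^ k) c = a"
  shows "\<exists>j. (f ^^ j) a = c"
proof -
  obtain m where m: "m > 0" "(f ^^ m) c = c"
    using assms(1) by (auto simp: cycle_state_def)
  have "(m - 1) * k + k = m * k"
    using m(1) by (simp add: diff_mult_distrib)
  then have "(f ^^ ((m - 1) * k)) a = (f ^^ (m * k)) c"
    using assms(2) by (metis comp_apply funpow_add)
  also have "\<dots> = c"
    using funpow_mod_eq[OF m(2), of "m * k"] by simp
  finally show ?thesis ..
qed

lemma fds_connected_reaches_cycle_state:
  assumes conn: "fds_connected S f" and a: "cycle_state S f a" and s: "s \<in> S"
  shows "\<exists>k. (f ^^ k) s = a"
proof -
  obtain m where m: "m > 0" "(f ^^ m) a = a"
    using a by (auto simp: cycle_state_def)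
  have "(a, s) \<in> (fds_arcs S f \<union> (fds_arcs S f)\<inverse>)\<^sup>*"
    using conn a s by (auto simp: fds_connected_def cycle_state_def)
  then show ?thesis
  proof (induction rule: rtrancl_induct)
    case base
    show ?case
      by (rule exI[of _ 0]) simp
  next
    case (step y z)
    then obtain k where k: "(f ^^ k) y = a"
      by blast
    from step.hyps(2) consider "z = f y" | "y = f z"
      by (auto simp: fds_arcs_def)
    then show ?case
    proof cases
      case 1
      have "Suc (k + m - 1) = m + k"
        using m(1) by simp
      then have "(f ^^ (k + m - 1)) z = (f ^^ m) ((f ^^ k) y)"
        using 1 by (metis comp_apply funpow_Suc_right funpow_add)
      then show ?thesis
        using k m(2) by metis
    next
      case 2
      then show ?thesis
        using k by (metis funpow_Suc_right comp_apply)
    qed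
  qed
qed

lemma fds_connected_cycle_state_periods:
  assumes "fds_connected S f" and "cycle_state S f a" and c: "cycle_state S f c"
  shows "(f ^^ d) c = c \<longleftrightarrow> (f ^^ d) a = a"
proof -
  have "c \<in> S"
    using c by (simp add: cycle_state_def)
  then obtain k where "(f ^^ k) c = a"
    using fds_connected_reaches_cycle_state[OF assms(1,2)] by blast
  moreover obtain j where "(f ^^ j) a = c"
    using cycle_state_reachable_back[OF c] calculation by blast
  ultimately show ?thesis
    by (rule funpow_fixed_iff_if_mutually_reachable)
qed

lemma morphism_funpow:
  assumes "\<forall>x\<in>A. f x \<in> A" and "\<forall>x\<in>A. \<phi> (f x) = g (\<phi> x)" and "x \<in> A"
  shows "\<phi> ((f ^^ n) x) = (g ^^ n) (\<phi> x)" and "(f ^^ n) x \<in> A"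
  using assms by (induction n) auto

lemma cycle_states_iso_periods:
  assumes fds: "is_fds S f"
    and iso: "fds_iso (cycle_states S f) f (cycle_states T g) g"
    and y: "cycle_state T g y"
  obtains c where "cycle_state S f c" and "\<And>d. (g ^^ d) y = y \<longleftrightarrow> (f ^^ d) c = c"
proof -
  obtain \<phi> where bij: "bij_betw \<phi> (cycle_states S f) (cycle_states T g)"
    and hom: "\<forall>x\<in>cycle_states S f. \<phi> (f x) = g (\<phi> x)"
    using iso by (auto simp: fds_iso_def)
  obtain c where c: "c \<in> cycle_states S f" and yc: "y = \<phi> c"
    using bij y by (auto simp: bij_betw_def cycle_states_def)
  have closed: "\<forall>x\<in>cycle_states S f. f x \<in> cycle_states S f"
    using cycle_states_closed[OF fds] by blast
  have "(g ^^ d) y = y \<longleftrightarrow> (f ^^ d) c = c" for d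
  proof -
    have "(g ^^ d) y = \<phi> ((f ^^ d) c)" and "(f ^^ d) c \<in> cycle_states S f"
      using morphism_funpow[OF closed hom c] yc by simp_all
    then show ?thesis
      using inj_on_eq_iff[OF bij_betw_imp_inj_on[OF bij]] c yc by simp
  qed
  then show thesis
    using that c by (auto simp: cycle_states_def)
qed

lemma fds_iso_sym:
  assumes iso: "fds_iso A f B g" and closed: "\<forall>x\<in>A. f x \<in> A"
  shows "fds_iso B g A f"
proof -
  obtain \<phi> where bij: "bij_betw \<phi> A B" and hom: "\<forall>x\<in>A. \<phi> (f x) = g (\<phi> x)"
    using iso by (auto simp: fds_iso_def)
  have "inv_into A \<phi> (g y) = f (inv_into A \<phi> y)" if "y \<in> B" for y
  proof -
    define x where "x = inv_into A \<phi> y"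
    have x: "x \<in> A" "\<phi> x = y"
      using that bij_betw_apply[OF bij_betw_inv_into[OF bij]] bij_betw_inv_into_right[OF bij]
      by (simp_all add: x_def)
    then have "g y = \<phi> (f x)"
      using hom by simp
    then show ?thesis
      using bij_betw_inv_into_left[OF bij] closed x by (simp add: x_def)
  qed
  then show ?thesis
    using bij_betw_inv_into[OF bij] by (auto simp: fds_iso_def)
qed

lemma digraph_iso_sym:
  assumes "digraph_iso V E W F"
  shows "digraph_iso W F V E"
proof -
  obtain \<phi> where bij: "bij_betw \<phi> V W"
    and arcs: "\<forall>u\<in>V. \<forall>v\<in>V. (u, v) \<in> E \<longleftrightarrow> (\<phi> u, \<phi> v) \<in> F"
    using assms by (auto simp: digraph_iso_def)
  have "(u, v) \<in> F \<longleftrightarrow> (inv_into V \<phi> u, inv_into V \<phi> v) \<in> E" if "u \<in> W" "v \<in> W" for u v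
  proof -
    have "inv_into V \<phi> u \<in> V" "inv_into V \<phi> v \<in> V"
      using that bij_betw_apply[OF bij_betw_inv_into[OF bij]] by auto
    then show ?thesis
      using arcs bij_betw_inv_into_right[OF bij] that by simp
  qed
  then show ?thesis
    using bij_betw_inv_into[OF bij] by (auto simp: digraph_iso_def)
qed

lemma unroll_iso_sym: "unroll_iso S f T g \<Longrightarrow> unroll_iso T g S f"
  unfolding unroll_iso_def by (rule digraph_iso_sym)

lemma unroll_vertices_iff:
  "(s, k) \<in> unroll_vertices S f \<longleftrightarrow> s \<in> S \<and> cycle_state S f ((f ^^ k) s)"
  by (simp add: unroll_vertices_def)

lemma unroll_arcs_iff:
  "((s, k), (s', k')) \<in> unroll_arcs S f \<longleftrightarrow>
     (s, k) \<in> unroll_vertices S f \<and> k \<ge> 1 \<and> s' = f s \<and> k' = k - 1"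
  by (auto simp: unroll_arcs_def)

lemma unroll_vertices_parent:
  assumes "is_fds S f" and "(s, Suc k) \<in> unroll_vertices S f"
  shows "(f s, k) \<in> unroll_vertices S f"
  using assms by (auto simp: unroll_vertices_iff is_fds_def funpow_swap1)

lemma unroll_vertices_cycle_state:
  "is_fds S f \<Longrightarrow> cycle_state S f a \<Longrightarrow> (a, k) \<in> unroll_vertices S f"
  by (auto simp: unroll_vertices_iff cycle_state_funpow) (simp add: cycle_state_def)

definition fds_embedding :: "'a set \<Rightarrow> ('a \<Rightarrow> 'a) \<Rightarrow> 'b set \<Rightarrow> ('b \<Rightarrow> 'b) \<Rightarrow> ('a \<Rightarrow> 'b) \<Rightarrow> bool"
  where "fds_embedding S f T g \<phi> \<longleftrightarrow> inj_on \<phi> S \<and> \<phi> ` S \<subseteq> T \<and> (\<forall>x\<in>S. \<phi> (f x) = g (\<phi> x))"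

lemma fds_iso_if_embeddings:
  assumes "finite S" and "finite T"
    and \<phi>: "fds_embedding S f T g \<phi>" and \<psi>: "fds_embedding T g S f \<psi>"
  shows "fds_iso S f T g"
proof -
  have "card S = card T"
    using assms card_bij_eq by (metis fds_embedding_def)
  then have "\<phi> ` S = T"
    using \<phi> assms(2) by (metis card_image card_subset_eq fds_embedding_def)
  then have "bij_betw \<phi> S T"
    using \<phi> by (simp add: bij_betw_def fds_embedding_def)
  then show ?thesis
    using \<phi> by (auto simp: fds_iso_def fds_embedding_def)
qed

locale unrolling_iso =
  fixes S :: "'a set" and f :: "'a \<Rightarrow> 'a" and T :: "'b set" and g :: "'b \<Rightarrow> 'b"
    and h :: "'a \<times> nat \<Rightarrow> 'b \<times> nat"
  assumes fds_S: "is_fds S f" and fds_T: "is_fds T g"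
    and bij_h: "bij_betw h (unroll_vertices S f) (unroll_vertices T g)"
    and arcs_h: "\<And>u v. u \<in> unroll_vertices S f \<Longrightarrow> v \<in> unroll_vertices S f \<Longrightarrow>
      (u, v) \<in> unroll_arcs S f \<longleftrightarrow> (h u, h v) \<in> unroll_arcs T g"
begin

lemma h_parent_arc:
  assumes "(s, Suc k) \<in> unroll_vertices S f"
  shows "(h (s, Suc k), h (f s, k)) \<in> unroll_arcs T g"
proof -
  have "((s, Suc k), (f s, k)) \<in> unroll_arcs S f"
    using assms by (simp add: unroll_arcs_iff)
  then show ?thesis
    using arcs_h[OF assms unroll_vertices_parent[OF fds_S assms]] by blast
qed

lemma h_level: "(s, k) \<in> unroll_vertices S f \<Longrightarrow> snd (h (s, k)) = k"
proof (induction k arbitrary: s)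
  case 0
  obtain y j where y: "h (s, 0) = (y, j)"
    by fastforce
  have yT: "(y, j) \<in> unroll_vertices T g"
    using 0 y bij_h by (metis bij_betwE)
  show ?case
  proof (rule ccontr)
    assume "snd (h (s, 0)) \<noteq> 0"
    then obtain i where j: "j = Suc i"
      using y not0_implies_Suc by auto
    then have "(g y, i) \<in> unroll_vertices T g"
      using unroll_vertices_parent[OF fds_T] yT by blast
    then obtain v where v: "v \<in> unroll_vertices S f" "h v = (g y, i)"
      using bij_h by (metis bij_betw_iff_bijections)
    have "((y, j), (g y, i)) \<in> unroll_arcs T g"
      using yT j by (simp add: unroll_arcs_iff)
    then have "((s, 0), v) \<in> unroll_arcs S f"
      using arcs_h[OF 0 v(1)] y v(2) by simp
    then show False
      by (cases v) (simp add: unroll_arcs_iff)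
  qed
next
  case (Suc k)
  then show ?case
    using h_parent_arc[OF Suc.prems] Suc.IH[OF unroll_vertices_parent[OF fds_S Suc.prems]]
    by (cases "h (s, Suc k)", cases "h (f s, k)") (auto simp: unroll_arcs_iff)
qed

lemma h_vertex: "(s, k) \<in> unroll_vertices S f \<Longrightarrow> (fst (h (s, k)), k) \<in> unroll_vertices T g"
  using h_level bij_h by (metis bij_betwE prod.collapse)

lemma fst_h_inj:
  assumes "(s, k) \<in> unroll_vertices S f" and "(s', k) \<in> unroll_vertices S f"
    and "fst (h (s, k)) = fst (h (s', k))"
  shows "s = s'"
  using assms h_level bij_h by (metis bij_betw_imp_inj_on inj_onD prod.collapse prod.inject)

lemma fst_h_parent:
  assumes "(s, Suc k) \<in> unroll_vertices S f"
  shows "fst (h (f s, k)) = g (fst (h (s, Suc k)))"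
  using h_parent_arc[OF assms]
  by (cases "h (s, Suc k)", cases "h (f s, k)") (auto simp: unroll_arcs_iff)

lemma fst_h_funpow:
  "(s, k + i) \<in> unroll_vertices S f \<Longrightarrow> fst (h ((f ^^ i) s, k)) = (g ^^ i) (fst (h (s, k + i)))"
proof (induction i arbitrary: s)
  case 0
  then show ?case by simp
next
  case (Suc i)
  then have "(f s, k + i) \<in> unroll_vertices S f"
    using unroll_vertices_parent[OF fds_S] by simp
  then show ?case
    using Suc fst_h_parent[of s "k + i"] by (simp add: funpow_Suc_right funpow_swap1)
qed

(* Climbing n = card T * d levels from (a, d + n) leads back to (a, d), and g^n of any
   state of Y is cyclic. *)
lemma cycle_state_fst_h_period:
  assumes a: "cycle_state S f a" and d: "(f ^^ d) a = a" "d > 0"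
  shows "cycle_state T g (fst (h (a, d)))"
proof -
  define n where "n = card T * d"
  have "(f ^^ n) a = a"
    using funpow_mod_eq[OF d(1), of n] by (simp add: n_def)
  then have "fst (h (a, d)) = (g ^^ n) (fst (h (a, d + n)))"
    using fst_h_funpow[OF unroll_vertices_cycle_state[OF fds_S a]] by metis
  moreover have "fst (h (a, d + n)) \<in> T"
    using h_vertex[OF unroll_vertices_cycle_state[OF fds_S a]] by (simp add: unroll_vertices_iff)
  ultimately show ?thesis
    using cycle_state_funpow_ge_card[OF fds_T] d(2) by (simp add: n_def)
qed

end

locale connected_unrolling_iso = unrolling_iso +
  fixes a :: 'a
  assumes connected: "fds_connected S f"
    and cycles_iso: "fds_iso (cycle_states S f) f (cycle_states T g) g"
    and cycle_a: "cycle_state S f a"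
begin

definition b :: 'b where "b = fst (h (a, 0))"

definition steps_to_a :: "'a \<Rightarrow> nat" where "steps_to_a s = (LEAST k. (f ^^ k) s = a)"

definition emb :: "'a \<Rightarrow> 'b" where "emb s = fst (h (s, steps_to_a s))"

lemma cycle_state_T_periods: "cycle_state T g y \<Longrightarrow> (g ^^ d) y = y \<longleftrightarrow> (f ^^ d) a = a"
  using cycle_states_iso_periods[OF fds_S cycles_iso]
    fds_connected_cycle_state_periods[OF connected cycle_a] by metis

lemma cycle_state_b: "cycle_state T g b"
  using h_vertex[OF unroll_vertices_cycle_state[OF fds_S cycle_a, of 0]]
  by (simp add: b_def unroll_vertices_iff)

lemma fst_h_a_period:
  assumes d: "(f ^^ d) a = a"
  shows "fst (h (a, d)) = b"
proof (cases "d = 0")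
  case True
  then show ?thesis by (simp add: b_def)
next
  case False
  then have cyc: "cycle_state T g (fst (h (a, d)))"
    using cycle_state_fst_h_period[OF cycle_a d] by simp
  have "(g ^^ d) (fst (h (a, d))) = b"
    using fst_h_funpow[of a 0 d] d unroll_vertices_cycle_state[OF fds_S cycle_a]
    by (simp add: b_def)
  then show ?thesis
    using cycle_state_T_periods[OF cyc, of d] d by simp
qed

lemma steps_to_a: "s \<in> S \<Longrightarrow> (f ^^ steps_to_a s) s = a"
  unfolding steps_to_a_def
  by (rule LeastI_ex) (rule fds_connected_reaches_cycle_state[OF connected cycle_a])

lemma steps_to_a_le: "(f ^^ k) s = a \<Longrightarrow> steps_to_a s \<le> k"
  unfolding steps_to_a_def by (rule Least_le)

lemma steps_to_a_a: "steps_to_a a = 0"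
  using steps_to_a_le[of 0 a] by simp

lemma vertex_steps_to_a: "s \<in> S \<Longrightarrow> (s, steps_to_a s) \<in> unroll_vertices S f"
  using cycle_a steps_to_a by (simp add: unroll_vertices_iff)

lemma emb_a: "emb a = b"
  by (simp add: emb_def b_def steps_to_a_a)

lemma emb_in: "s \<in> S \<Longrightarrow> emb s \<in> T"
  using h_vertex[OF vertex_steps_to_a] by (simp add: emb_def unroll_vertices_iff)

lemma emb_commute:
  assumes s: "s \<in> S"
  shows "emb (f s) = g (emb s)"
proof -
  define k where "k = steps_to_a (f s)"
  have fs: "f s \<in> S"
    using fds_S s by (simp add: is_fds_def)
  have k: "(f ^^ Suc k) s = a"
    using steps_to_a[OF fs] by (simp add: k_def funpow_swap1)
  have "fst (h (s, Suc k)) = emb s"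
  proof (cases "s = a")
    case True
    then show ?thesis
      using fst_h_a_period k emb_a by simp
  next
    case False
    then obtain n where n: "steps_to_a s = Suc n"
      using steps_to_a[OF s] by (metis funpow_0 not0_implies_Suc)
    then have "(f ^^ n) (f s) = a"
      using steps_to_a[OF s] by (simp add: funpow_swap1)
    then have "steps_to_a s = Suc k"
      using n steps_to_a_le[OF k] steps_to_a_le[of n "f s"] by (simp add: k_def)
    then show ?thesis
      by (simp add: emb_def)
  qed
  moreover have "(s, Suc k) \<in> unroll_vertices S f"
    using s cycle_a k by (simp add: unroll_vertices_iff)
  ultimately show ?thesis
    using fst_h_parent by (simp add: emb_def k_def)
qed

lemma emb_funpow: "s \<in> S \<Longrightarrow> emb ((f ^^ n) s) = (g ^^ n) (emb s)"
  by (induction n) (simp_all add: emb_commute fds_funpow_closed[OF fds_S])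

lemma eq_a_if_emb_eq_b:
  assumes s: "s \<in> S" and eq: "emb s = b"
  shows "s = a"
proof -
  define d where "d = steps_to_a s"
  have "(g ^^ d) b = fst (h ((f ^^ d) s, 0))"
    using fst_h_funpow[of s 0 d] vertex_steps_to_a[OF s] eq by (simp add: emb_def d_def)
  then have "(g ^^ d) b = b"
    using steps_to_a[OF s] by (simp add: b_def d_def)
  then have "fst (h (a, d)) = fst (h (s, d))"
    using fst_h_a_period cycle_state_T_periods[OF cycle_state_b] eq by (simp add: emb_def d_def)
  then show ?thesis
    using fst_h_inj unroll_vertices_cycle_state[OF fds_S cycle_a] vertex_steps_to_a[OF s]
    by (metis d_def)
qed

lemma inj_on_emb: "inj_on emb S"
proof -
  have "s = s'" if s: "s \<in> S" and s': "s' \<in> S" and eq: "emb s = emb s'"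
    and le: "steps_to_a s \<le> steps_to_a s'" for s s'
  proof -
    define k where "k = steps_to_a s"
    have "emb ((f ^^ k) s') = emb ((f ^^ k) s)"
      using emb_funpow s s' eq by simp
    then have "(f ^^ k) s' = a"
      using eq_a_if_emb_eq_b fds_funpow_closed[OF fds_S s'] steps_to_a[OF s] emb_a
      by (simp add: k_def)
    then have "steps_to_a s' = k"
      using steps_to_a_le le k_def by (simp add: le_antisym)
    then show "s = s'"
      using fst_h_inj vertex_steps_to_a s s' eq by (metis emb_def k_def)
  qed
  then show ?thesis
    by (metis inj_onI nat_le_linear)
qed

lemma fds_embedding_emb: "fds_embedding S f T g emb"
  using inj_on_emb emb_in emb_commute by (auto simp: fds_embedding_def)

end

lemma connected_fds_embedding:
  assumes fds: "is_fds S f" "is_fds T g" and connected: "fds_connected S f"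
    and cycles: "fds_iso (cycle_states S f) f (cycle_states T g) g"
    and unroll: "unroll_iso S f T g"
  shows "\<exists>\<phi>. fds_embedding S f T g \<phi>"
proof (cases "S = {}")
  case True
  then show ?thesis by (simp add: fds_embedding_def)
next
  case False
  then obtain s where "s \<in> S"
    by blast
  then have a: "cycle_state S f ((f ^^ card S) s)"
    using cycle_state_funpow_ge_card[OF fds(1)] by blast
  obtain h where "unrolling_iso S f T g h"
    using unroll fds by (auto simp: unroll_iso_def digraph_iso_def unrolling_iso_def)
  then have "connected_unrolling_iso S f T g h ((f ^^ card S) s)"
    using connected cycles a
    by (simp add: connected_unrolling_iso_def connected_unrolling_iso_axioms_def)
  then show ?thesis
    by (meson connected_unrolling_iso.fds_embedding_emb)
qed

theorem mainTheorem13: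
  fixes S :: "'a set" and f :: "'a \<Rightarrow> 'a" and T :: "'b set" and g :: "'b \<Rightarrow> 'b"
  assumes "is_fds S f" and "is_fds T g"
    and "fds_connected S f" and "fds_connected T g"
    and "fds_iso (cycle_states S f) f (cycle_states T g) g"
    and "unroll_iso S f T g"
  shows "fds_iso S f T g"
proof -
  obtain \<phi> where \<phi>: "fds_embedding S f T g \<phi>"
    using connected_fds_embedding assms(1-3,5,6) by blast
  have "fds_iso (cycle_states T g) g (cycle_states S f) f"
    using fds_iso_sym assms(5) cycle_states_closed[OF assms(1)] by blast
  then obtain \<psi> where \<psi>: "fds_embedding T g S f \<psi>"
    using connected_fds_embedding assms(1,2,4) unroll_iso_sym[OF assms(6)] by blast
  show ?thesis
    using fds_iso_if_embeddings \<phi> \<psi> assms(1,2) by (auto simp: is_fds_def)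
qed

end
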